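(* Let $f:\mathcal D\subset\Omega\times(0,\infty)\to\Omega\times(0,\infty)$ be a measure-preserving embedding of the form $f(\omega,r)=(\omega+\psi(F(\omega,r)),\,r+G(\omega,r))$ with $F,G:\mathcal D\to\mathbb R$ continuous. Suppose there is a function $W\in\mathcal C^1_\psi(\Omega\times(0,\infty))$ and constants $\beta,\delta>0$ with $$0<\beta\le\partial_rW(\omega,r)\le\delta\quad\text{for all }\omega\in\Omega,\ r\in(0,\infty),$$ and $$W(f(\omega,r))\le W(\omega,r)+k(r)\quad\text{for all }(\omega,r)\in\mathcal D,$$ where $k:(0,\infty)\to\mathbb R$ is decreasing, bounded and satisfies $\lim_{r\to\infty}k(r)=0$. Then for $\mu_\Omega$-almost every $\omega\in\Omega$ the set $E_\omega\subset\mathbb R\times(0,\infty)$ has two-dimensional Lebesgue measure zero.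
   Context: $\Omega$ is a commutative (written additively), compact, metrizable topological group, and $\psi:\mathbb R\to\Omega$ is a continuous group homomorphism with $\psi(\mathbb R)$ dense in $\Omega$. $\mu_\Omega$ is the Haar probability measure of $\Omega$, $\lambda$ is Lebesgue measure on $\mathbb R$, $\lambda^2$ on $\mathbb R^2$. For $U:\Omega\to\mathbb R$ set $\partial_\psi U(\omega)=\lim_{t\to0}\frac{U(\omega+\psi(t))-U(\omega)}{t}$; $\mathcal C^1_\psi(\Omega)$ is the space of continuous $U$ for which $\partial_\psi U$ exists at every point and is continuous on $\Omega$. $\mathcal C^1_\psi(\Omega\times(0,\infty))$ denotes the functions $W(\omega,r)$ with $W(\cdot,r)\in\mathcal C^1_\psi(\Omega)$ for every $r$ and $W(\omega,\cdot)\in\mathcal C^1(0,\infty)$ for every $\omega$. A map $f:\mathcal D\to\Omega\times(0,\infty)$ with $\mathcal D\subset\Omega\times(0,\infty)$ open is a measure-preserving embedding if it is continuous, injective and $(\mu_\Omega\otimes\lambda)(f(\mathcal B))=(\mu_\Omega\otimes\lambda)(\mathcal B)$ for all Borel $\mathcal B\subset\mathcal D$. For $\omega\in\Omega$ let $\psi_\omega(t)=\omega+\psi(t)$, $D_\omega=\{(t,r)\in\mathbb R\times(0,\infty):(\psi_\omega(t),r)\in\mathcal D\}$ and $f_\omega:D_\omega\to\mathbb R\times(0,\infty)$, $f_\omega(t,r)=(t+F(\psi_\omega(t),r),\,r+G(\psi_\omega(t),r))$. Set $D_{\omega,1}=D_\omega$, $D_{\omega,n+1}=f_\omega^{-1}(D_{\omega,n})$,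 $D_{\omega,\infty}=\bigcap_{n\ge1}D_{\omega,n}$, and for $(t_0,r_0)\in D_{\omega,\infty}$ write $(t_n,r_n)=f_\omega^n(t_0,r_0)$. The escaping set is $E_\omega=\{(t_0,r_0)\in D_{\omega,\infty}:\lim_{n\to\infty}r_n=\infty\}$. *)

theory Defs
  imports "HOL-Probability.Probability"
begin

definition psi_has_deriv :: "(real \<Rightarrow> 'a::{ab_group_add,topological_space}) \<Rightarrow> ('a \<Rightarrow> real) \<Rightarrow> 'a \<Rightarrow> real \<Rightarrow> bool" where
  "psi_has_deriv \<psi> U \<omega> L \<longleftrightarrow> ((\<lambda>t. (U (\<omega> + \<psi> t) - U \<omega>) / t) \<longlongrightarrow> L) (at 0)"

definition psi_deriv :: "(real \<Rightarrow> 'a::{ab_group_add,topological_space}) \<Rightarrow> ('a \<Rightarrow> real) \<Rightarrow> 'a \<Rightarrow> real" where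
  "psi_deriv \<psi> U \<omega> = Lim (at 0) (\<lambda>t. (U (\<omega> + \<psi> t) - U \<omega>) / t)"

definition C1_psi :: "(real \<Rightarrow> 'a::{ab_group_add,topological_space}) \<Rightarrow> ('a \<Rightarrow> real) \<Rightarrow> bool" where
  "C1_psi \<psi> U \<longleftrightarrow> continuous_on UNIV U \<and> (\<forall>\<omega>. \<exists>L. psi_has_deriv \<psi> U \<omega> L)
     \<and> continuous_on UNIV (psi_deriv \<psi> U)"

definition C1_psi_half :: "(real \<Rightarrow> 'a::{ab_group_add,topological_space}) \<Rightarrow> ('a \<Rightarrow> real \<Rightarrow> real) \<Rightarrow> bool" where
  "C1_psi_half \<psi> W \<longleftrightarrow> (\<forall>r>0. C1_psi \<psi> (\<lambda>\<omega>. W \<omega> r))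
     \<and> (\<forall>\<omega>. \<exists>W'. (\<forall>r>0. (W \<omega> has_real_derivative W' r) (at r)) \<and> continuous_on {0<..} W')"

definition f_om :: "(real \<Rightarrow> 'a::ab_group_add) \<Rightarrow> ('a \<times> real \<Rightarrow> real) \<Rightarrow> ('a \<times> real \<Rightarrow> real) \<Rightarrow> 'a
    \<Rightarrow> real \<times> real \<Rightarrow> real \<times> real" where
  "f_om \<psi> F G \<omega> = (\<lambda>(t, r). (t + F (\<omega> + \<psi> t, r), r + G (\<omega> + \<psi> t, r)))"

definition D_om :: "(real \<Rightarrow> 'a::ab_group_add) \<Rightarrow> ('a \<times> real) set \<Rightarrow> 'a \<Rightarrow> (real \<times> real) set" where
  "D_om \<psi> D \<omega> = {(t, r). r > 0 \<and> (\<omega> + \<psi> t, r) \<in> D}"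

text \<open>D_om_n ... \<omega> n is the paper's D_{omega,n+1}; preimages are taken inside the domain D_omega.\<close>
primrec D_om_n :: "(real \<Rightarrow> 'a::ab_group_add) \<Rightarrow> ('a \<times> real) set \<Rightarrow> ('a \<times> real \<Rightarrow> real) \<Rightarrow> ('a \<times> real \<Rightarrow> real)
    \<Rightarrow> 'a \<Rightarrow> nat \<Rightarrow> (real \<times> real) set" where
  "D_om_n \<psi> D F G \<omega> 0 = D_om \<psi> D \<omega>"
| "D_om_n \<psi> D F G \<omega> (Suc n) = {p \<in> D_om \<psi> D \<omega>. f_om \<psi> F G \<omega> p \<in> D_om_n \<psi> D F G \<omega> n}"

definition D_om_inf :: "(real \<Rightarrow> 'a::ab_group_add) \<Rightarrow> ('a \<times> real) set \<Rightarrow> ('a \<times> real \<Rightarrow> real) \<Rightarrow> ('a \<times> real \<Rightarrow> real)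
    \<Rightarrow> 'a \<Rightarrow> (real \<times> real) set" where
  "D_om_inf \<psi> D F G \<omega> = (\<Inter>n. D_om_n \<psi> D F G \<omega> n)"

definition escaping_set :: "(real \<Rightarrow> 'a::ab_group_add) \<Rightarrow> ('a \<times> real) set \<Rightarrow> ('a \<times> real \<Rightarrow> real) \<Rightarrow> ('a \<times> real \<Rightarrow> real)
    \<Rightarrow> 'a \<Rightarrow> (real \<times> real) set" where
  "escaping_set \<psi> D F G \<omega> = {p \<in> D_om_inf \<psi> D F G \<omega>.
      filterlim (\<lambda>n. snd ((f_om \<psi> F G \<omega> ^^ n) p)) at_top sequentially}"

end

theory Submission
  imports Defs
begin

(* Let E be the set of points of \<Omega> \<times> (0,\<infinity>) whose f-orbit stays in D with r \<rightarrow> \<infinity>, and for a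
   level T let last_exit T consist of the points of E at level W \<le> T whose later iterates all lie
   above T. Since \<partial>\<^sub>r W \<ge> \<beta>, W tends to \<infinity> along escaping orbits, so every escaping orbit has a
   last exit below any level T \<ge> W. A last-exit point jumps over T in one step, hence lies in the
   band T - k(\<rho>) < W \<le> T with \<rho> \<rightarrow> \<infinity> as T \<rightarrow> \<infinity>, and this band has measure at most 2 k(\<rho>) / \<beta>.
   Pushing the part of last_exit c that exits level T at time n forward by f\<^sup>n gives disjoint
   subsets of last_exit T of the same measure, so the measure of last_exit c is at most that of
   last_exit T, which tends to 0. Hence every last_exit c is null, and so is E, the union of their
   preimages. Finally E\<^sub>\<omega> is the slice of E along the \<psi>-orbit of \<omega>, and Haar invariance together
   with Fubini transfer the nullity of E to that of E\<^sub>\<omega> for almost every \<omega>. *)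

lemma compact_metric_countable_basis:
  assumes "compact (UNIV :: 'a::metric_space set)"
  obtains B :: "'a::metric_space set set" where "countable B" "topological_basis B"
proof -
  have "\<exists>C. finite C \<and> UNIV \<subseteq> (\<Union>c\<in>C. ball (c::'a) (1 / Suc m))" for m :: nat
  proof -
    have "UNIV \<subseteq> (\<Union>c\<in>UNIV. ball (c::'a) (1 / Suc m))" by auto
    from compactE_image[OF assms _ this] show ?thesis by (metis open_ball)
  qed
  then obtain C :: "nat \<Rightarrow> 'a set"
    where C: "\<And>m. finite (C m)" "\<And>m. UNIV \<subseteq> (\<Union>c\<in>C m. ball c (1 / Suc m))"
    by metis
  define B where "B = (\<Union>m. (\<lambda>c. ball c (1 / Suc m)) ` C m)"
  have "countable B" unfolding B_def by (rule countable_UN) (auto intro: countable_finite C(1))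
  moreover have "topological_basis B"
  proof (rule topological_basisI)
    show "open b" if "b \<in> B" for b using that by (auto simp: B_def)
  next
    fix O' :: "'a set" and x assume "open O'" "x \<in> O'"
    then obtain e where e: "e > 0" "ball x e \<subseteq> O'" by (meson open_contains_ball)
    obtain m :: nat where m: "1 / Suc m < e / 2"
      using e(1) half_gt_zero_iff nat_approx_posE by metis
    obtain c where c: "c \<in> C m" "x \<in> ball c (1 / Suc m)" using C(2)[of m] by blast
    have "ball c (1 / Suc m) \<subseteq> ball x e"
    proof
      fix y assume "y \<in> ball c (1 / Suc m)"
      moreover have "dist x y \<le> dist x c + dist c y" by (rule dist_triangle)
      ultimately show "y \<in> ball x e" using c(2) m by (simp add: dist_commute)
    qed
    then show "\<exists>b\<in>B. x \<in> b \<and> b \<subseteq> O'" using c e(2) by (auto simp: B_def)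
  qed
  ultimately show thesis using that by blast
qed

lemma topological_basis_Union_UNIV:
  assumes "topological_basis B"
  shows "\<Union>B = UNIV"
proof -
  obtain B' where "B' \<subseteq> B" "\<Union>B' = UNIV"
    using assms open_UNIV unfolding topological_basis_def by blast
  then show ?thesis by blast
qed

lemma sets_pair_borel_countable_basis:
  fixes Ba :: "'a::topological_space set set" and Bb :: "'b::topological_space set set"
  assumes a: "countable Ba" "topological_basis Ba"
    and b: "countable Bb" "topological_basis Bb"
  shows "sets (borel \<Otimes>\<^sub>M borel) = sets (borel :: ('a \<times> 'b) measure)"
proof -
  have borel_prod: "(borel :: ('a \<times> 'b) measure) = sigma UNIV ((\<lambda>(a, b). a \<times> b) ` (Ba \<times> Bb))"
    by (rule borel_eq_countable_basis) (auto intro!: topological_basis_prod a b)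
  have sets_a: "sets (borel :: 'a measure) = sigma_sets UNIV Ba"
    by (simp add: borel_eq_countable_basis[OF a] sets_measure_of)
  have sets_b: "sets (borel :: 'b measure) = sigma_sets UNIV Bb"
    by (simp add: borel_eq_countable_basis[OF b] sets_measure_of)
  have "sets (borel \<Otimes>\<^sub>M borel) =
      sets (sigma (space (borel::'a measure) \<times> space (borel::'b measure)) {x \<times> y | x y. x \<in> Ba \<and> y \<in> Bb})"
    by (rule sets_pair_eq[where Ca=Ba and Cb=Bb])
       (simp_all add: sets_a sets_b a b topological_basis_Union_UNIV[OF a(2)]
         topological_basis_Union_UNIV[OF b(2)])
  also have "{x \<times> y | x y. x \<in> Ba \<and> y \<in> Bb} = (\<lambda>(a, b). a \<times> b) ` (Ba \<times> Bb)" by auto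
  finally show ?thesis using borel_prod by simp
qed

lemma sets_pair_measure_borel_compact:
  fixes \<mu> :: "'a::metric_space measure" and N :: "'b::second_countable_topology measure"
  assumes "compact (UNIV :: 'a set)" "sets \<mu> = sets borel" "sets N = sets borel"
  shows "sets (\<mu> \<Otimes>\<^sub>M N) = sets (borel :: ('a \<times> 'b) measure)"
proof -
  obtain Ba :: "'a set set" where "countable Ba" "topological_basis Ba"
    using compact_metric_countable_basis[OF assms(1)] by blast
  moreover obtain Bb :: "'b set set" where "countable Bb" "topological_basis Bb"
    using ex_countable_basis by blast
  moreover have "sets (\<mu> \<Otimes>\<^sub>M N) = sets (borel \<Otimes>\<^sub>M borel)"
    using assms(2,3) by (rule sets_pair_measure_cong)
  ultimately show ?thesis using sets_pair_borel_countable_basis by metis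
qed

lemma open_Times_compact_sigma_compact:
  fixes U :: "('a::metric_space \<times> 'b::euclidean_space) set"
  assumes "compact (UNIV :: 'a set)" "open U"
  obtains K :: "nat \<Rightarrow> ('a \<times> 'b) set" where "\<And>m. compact (K m)" "U = (\<Union>m. K m)"
proof
  define K where "K m = (UNIV \<times> cball 0 (real m)) - (\<Union>q\<in>-U. ball q (1 / Suc m))" for m
  show "compact (K m)" for m
    unfolding K_def Diff_eq
    by (intro compact_Int_closed compact_Times assms(1) compact_cball closed_Compl open_UN) auto
  show "U = (\<Union>m. K m)"
  proof
    show "U \<subseteq> (\<Union>m. K m)"
    proof
      fix p assume "p \<in> U"
      then obtain e where e: "e > 0" "ball p e \<subseteq> U" using assms(2) open_contains_ball by blast
      obtain m1 :: nat where m1: "1 / Suc m1 < e" using nat_approx_posE e(1) by blast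
      obtain m2 :: nat where m2: "norm (snd p) \<le> real m2" using real_arch_simple by blast
      define m where "m = m1 + m2"
      have "1 / real (Suc m) \<le> 1 / real (Suc m1)" by (intro divide_left_mono) (auto simp: m_def)
      then have "q \<in> U" if "dist q p < 1 / Suc m" for q
        using e(2) m1 that by (auto simp: dist_commute)
      moreover have "norm (snd p) \<le> real m" using m2 by (simp add: m_def)
      ultimately have "p \<in> K m" by (cases p) (auto simp: K_def)
      then show "p \<in> (\<Union>m. K m)" by blast
    qed
    show "(\<Union>m. K m) \<subseteq> U" by (force simp: K_def)
  qed
qed

(* Images of compact sets are compact, hence closed, and injectivity makes the image commute with
   relative complements, so the image of every Borel set follows by induction over the \<sigma>-algebra. *)
lemma sets_borel_image_inj_on:
  fixes f :: "'a::topological_space \<Rightarrow> 'b::t2_space"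
  assumes D: "open D" and f: "continuous_on D f" "inj_on f D"
    and sigma_compact: "\<And>U. open U \<Longrightarrow> U \<subseteq> D \<Longrightarrow> \<exists>K::nat \<Rightarrow> 'a set. (\<forall>m. compact (K m)) \<and> U = (\<Union>m. K m)"
    and B: "B \<in> sets borel" "B \<subseteq> D"
  shows "f ` B \<in> sets borel"
proof -
  have open_image: "f ` U \<in> sets borel" if U: "open U" "U \<subseteq> D" for U
  proof -
    obtain K :: "nat \<Rightarrow> 'a set" where K: "\<And>m. compact (K m)" "U = (\<Union>m. K m)"
      using sigma_compact[OF U] by blast
    have "compact (f ` K m)" for m
      using K U(2) by (intro compact_continuous_image continuous_on_subset[OF f(1)]) auto
    then have "(\<Union>m. f ` K m) \<in> sets borel" by (auto intro: borel_closed compact_imp_closed)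
    then show ?thesis using K(2) by (simp add: image_UN)
  qed
  have "X \<in> sigma_sets UNIV {S. open S} \<Longrightarrow> f ` (X \<inter> D) \<in> sets borel" for X
  proof (induction rule: sigma_sets.induct)
    case (Basic a)
    then show ?case using D by (intro open_image) auto
  next
    case (Compl a)
    have "(UNIV - a) \<inter> D = D - (a \<inter> D)" by blast
    then have "f ` ((UNIV - a) \<inter> D) = f ` D - f ` (a \<inter> D)"
      using inj_on_image_set_diff[OF f(2), of D "a \<inter> D"] by auto
    then show ?case using Compl.IH open_image[OF D subset_refl] by auto
  next
    case (Union a)
    have "f ` ((\<Union>i. a i) \<inter> D) = (\<Union>i. f ` (a i \<inter> D))" by blast
    then show ?case using Union.IH by auto
  qed simp
  from this[of B] B show ?thesis by (simp add: sets_borel[symmetric] Int_absorb2)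
qed

lemma sets_Collect_filterlim_at_top [measurable]:
  fixes u :: "nat \<Rightarrow> 'b \<Rightarrow> real"
  assumes [measurable]: "\<And>n. u n \<in> borel_measurable M"
  shows "{x \<in> space M. filterlim (\<lambda>n. u n x) at_top sequentially} \<in> sets M"
proof -
  have "filterlim (\<lambda>n. u n x) at_top sequentially \<longleftrightarrow> (\<forall>m::nat. \<exists>N. \<forall>n\<ge>N. real m \<le> u n x)" for x
    unfolding filterlim_at_top eventually_sequentially
    by (meson order_trans real_arch_simple)
  then show ?thesis by simp
qed

lemma deriv_bounds_imp_increment_bounds:
  fixes g :: "real \<Rightarrow> real"
  assumes g: "\<And>x. a < x \<Longrightarrow> g differentiable (at x)"
    and bounds: "\<And>x. a < x \<Longrightarrow> \<beta> \<le> deriv g x \<and> deriv g x \<le> \<delta>"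
    and "a < r" "r \<le> s"
  shows "\<beta> * (s - r) \<le> g s - g r \<and> g s - g r \<le> \<delta> * (s - r)"
proof (cases "r = s")
  case False
  with assms have "r < s" by simp
  have "(g has_real_derivative deriv g x) (at x)" if "r \<le> x" for x
    using g[of x] that \<open>a < r\<close> by (simp add: DERIV_deriv_iff_real_differentiable)
  from MVT2[OF \<open>r < s\<close> this] obtain z where z: "r < z" "z < s" "g s - g r = (s - r) * deriv g z"
    by blast
  moreover have "\<beta> \<le> deriv g z" "deriv g z \<le> \<delta>" using bounds[of z] z(1) \<open>a < r\<close> by auto
  ultimately show ?thesis using \<open>r < s\<close> by (simp add: mult_left_mono)
qed simp

section \<open>Forward orbits staying in a domain\<close>

primrec iter_domain :: "('b \<Rightarrow> 'b) \<Rightarrow> 'b set \<Rightarrow> nat \<Rightarrow> 'b set" where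
  "iter_domain f D 0 = D"
| "iter_domain f D (Suc n) = {p \<in> D. f p \<in> iter_domain f D n}"

definition escaping :: "('b \<Rightarrow> 'b) \<Rightarrow> 'b set \<Rightarrow> ('b \<Rightarrow> real) \<Rightarrow> 'b set" where
  "escaping f D h = {p \<in> (\<Inter>n. iter_domain f D n). filterlim (\<lambda>n. h ((f ^^ n) p)) at_top sequentially}"

lemma escaping_vimage_semiconj:
  assumes "\<And>p. f (j p) = j (g p)" and "D' = j -` D" and "\<And>p. h (j p) = h' p"
  shows "escaping g D' h' = j -` escaping f D h"
proof -
  have "iter_domain g D' n = j -` iter_domain f D n" for n
    by (induction n) (auto simp: assms)
  moreover have "(f ^^ n) (j p) = j ((g ^^ n) p)" for n p
    by (induction n) (simp_all add: assms(1))
  ultimately show ?thesis by (auto simp: escaping_def assms(3))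
qed

lemma escaping_set_eq_escaping: "escaping_set \<psi> D F G \<omega> = escaping (f_om \<psi> F G \<omega>) (D_om \<psi> D \<omega>) snd"
proof -
  have "D_om_n \<psi> D F G \<omega> n = iter_domain (f_om \<psi> F G \<omega>) (D_om \<psi> D \<omega>) n" for n
    by (induction n) simp_all
  then show ?thesis by (simp add: escaping_set_def escaping_def D_om_inf_def)
qed

lemma Inter_iter_domain_step:
  assumes "p \<in> (\<Inter>n. iter_domain f D n)"
  shows "p \<in> D" "f p \<in> (\<Inter>n. iter_domain f D n)"
proof -
  have dom: "p \<in> iter_domain f D n" for n using assms by (rule InterD) simp
  from dom[of 0] show "p \<in> D" by simp
  from dom[of "Suc n" for n] show "f p \<in> (\<Inter>n. iter_domain f D n)" by simp
qed

lemma escaping_subset_iter_domain: "escaping f D h \<subseteq> iter_domain f D n"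
  by (auto simp: escaping_def)

lemma escaping_subset: "escaping f D h \<subseteq> D"
  using escaping_subset_iter_domain[of f D h 0] by simp

lemma escaping_step:
  assumes "p \<in> escaping f D h"
  shows "f p \<in> escaping f D h"
proof -
  have dom: "p \<in> (\<Inter>n. iter_domain f D n)"
    and lim: "filterlim (\<lambda>n. h ((f ^^ n) p)) at_top sequentially"
    using assms unfolding escaping_def by blast+
  have "filterlim (\<lambda>n. h ((f ^^ Suc n) p)) at_top sequentially"
    by (rule filterlim_sequentially_Suc[THEN iffD2, OF lim])
  then have "filterlim (\<lambda>n. h ((f ^^ n) (f p))) at_top sequentially"
    by (simp add: funpow_Suc_right del: funpow.simps)
  with Inter_iter_domain_step(2)[OF dom] show ?thesis unfolding escaping_def by blast
qed

lemma escaping_funpow: "p \<in> escaping f D h \<Longrightarrow> (f ^^ n) p \<in> escaping f D h"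
  by (induction n) (auto intro: escaping_step)

lemma inj_on_funpow_iter_domain:
  assumes "inj_on f D"
  shows "inj_on (f ^^ n) (iter_domain f D n)"
proof (induction n)
  case (Suc n)
  show ?case
  proof (rule inj_onI)
    fix p q assume p: "p \<in> iter_domain f D (Suc n)" and q: "q \<in> iter_domain f D (Suc n)"
      and "(f ^^ Suc n) p = (f ^^ Suc n) q"
    then have "(f ^^ n) (f p) = (f ^^ n) (f q)" by (simp add: funpow_Suc_right del: funpow.simps)
    with Suc.IH p q have "f p = f q" by (auto dest: inj_onD)
    with assms p q show "p = q" by (auto dest: inj_onD)
  qed
qed simp

lemma funpow_image_iter_domain:
  assumes "\<And>B. B \<in> sets M \<Longrightarrow> B \<subseteq> D \<Longrightarrow> f ` B \<in> sets M \<and> emeasure M (f ` B) = emeasure M B"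
    and "B \<in> sets M" "B \<subseteq> iter_domain f D n"
  shows "(f ^^ n) ` B \<in> sets M \<and> emeasure M ((f ^^ n) ` B) = emeasure M B"
  using assms(2,3)
proof (induction n arbitrary: B)
  case (Suc n)
  have "B \<subseteq> D" "f ` B \<subseteq> iter_domain f D n" using Suc.prems(2) by auto
  with assms(1)[OF Suc.prems(1)] have "f ` B \<in> sets M" "emeasure M (f ` B) = emeasure M B" by simp_all
  moreover have "(f ^^ Suc n) ` B = (f ^^ n) ` (f ` B)"
    by (simp add: funpow_Suc_right image_comp del: funpow.simps)
  ultimately show ?case using Suc.IH[OF \<open>f ` B \<in> sets M\<close> \<open>f ` B \<subseteq> iter_domain f D n\<close>] by simp
qed simp

section \<open>The escaping set of a measure-preserving embedding\<close>

locale escape_setting =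
  fixes \<mu> :: "'a::metric_space measure"
    and D :: "('a \<times> real) set"
    and f :: "'a \<times> real \<Rightarrow> 'a \<times> real"
    and W :: "'a \<Rightarrow> real \<Rightarrow> real"
    and k :: "real \<Rightarrow> real"
    and \<beta> \<delta> :: real
  assumes compact_space: "compact (UNIV :: 'a set)"
    and prob_space_\<mu>: "prob_space \<mu>"
    and sets_\<mu>: "sets \<mu> = sets borel"
    and D_open: "open D"
    and D_subset: "D \<subseteq> UNIV \<times> {0<..}"
    and f_cont: "continuous_on D f"
    and f_inj: "inj_on f D"
    and f_measure_preserving: "\<And>B. B \<in> sets borel \<Longrightarrow> B \<subseteq> D \<Longrightarrow>
      emeasure (\<mu> \<Otimes>\<^sub>M lborel) (f ` B) = emeasure (\<mu> \<Otimes>\<^sub>M lborel) B"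
    and W_cont: "\<And>r. 0 < r \<Longrightarrow> continuous_on UNIV (\<lambda>\<omega>. W \<omega> r)"
    and W_differentiable: "\<And>\<omega> r. 0 < r \<Longrightarrow> W \<omega> differentiable (at r)"
    and W_deriv_bounds: "\<And>\<omega> r. 0 < r \<Longrightarrow> \<beta> \<le> deriv (W \<omega>) r \<and> deriv (W \<omega>) r \<le> \<delta>"
    and beta_pos: "0 < \<beta>"
    and W_step: "\<And>p. p \<in> D \<Longrightarrow> case_prod W (f p) \<le> case_prod W p + k (snd p)"
    and k_antimono: "antimono_on {0<..} k"
    and k_bounded: "bounded (k ` {0<..})"
    and k_tendsto: "(k \<longlongrightarrow> 0) at_top"
begin

abbreviation \<nu> :: "('a \<times> real) measure" where "\<nu> \<equiv> \<mu> \<Otimes>\<^sub>M lborel"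

definition E :: "('a \<times> real) set" where "E = escaping f D snd"

lemma sets_\<nu>: "sets \<nu> = sets borel"
  by (rule sets_pair_measure_borel_compact[OF compact_space sets_\<mu>]) simp

lemma delta_pos: "0 < \<delta>"
  using W_deriv_bounds[of 1] beta_pos by force

lemma W_increment_bounds:
  "0 < r \<Longrightarrow> r \<le> s \<Longrightarrow> \<beta> * (s - r) \<le> W \<omega> s - W \<omega> r \<and> W \<omega> s - W \<omega> r \<le> \<delta> * (s - r)"
  using deriv_bounds_imp_increment_bounds[of 0 "W \<omega>"] W_differentiable W_deriv_bounds by blast

lemma W_increment_abs_bounds:
  assumes "0 < r" "0 < s"
  shows "\<beta> * \<bar>s - r\<bar> \<le> \<bar>W \<omega> s - W \<omega> r\<bar> \<and> \<bar>W \<omega> s - W \<omega> r\<bar> \<le> \<delta> * \<bar>s - r\<bar>"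
proof (cases "r \<le> s")
  case True
  moreover have "0 \<le> \<beta> * (s - r)" using True beta_pos by simp
  ultimately show ?thesis using W_increment_bounds[of r s \<omega>] assms by auto
next
  case False
  moreover have "0 \<le> \<beta> * (r - s)" using False beta_pos by simp
  ultimately show ?thesis using W_increment_bounds[of s r \<omega>] assms by auto
qed

lemma W_lipschitz: "\<delta>-lipschitz_on {0<..} (W \<omega>)"
  using W_increment_abs_bounds delta_pos by (intro lipschitz_onI) (auto simp: dist_real_def)

lemma W_continuous: "continuous_on (UNIV \<times> {0<..}) (case_prod W)"
proof (rule continuous_on_TimesI)
  show "local_lipschitz UNIV {0<..} W"
  proof (rule local_lipschitzI)
    fix \<omega> r
    have "\<delta>-lipschitz_on (cball r 1 \<inter> {0<..}) (W \<omega>')" for \<omega>'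
      using W_lipschitz by (rule lipschitz_on_subset) blast
    then show "\<exists>u>0. \<exists>L. \<forall>\<omega>'\<in>cball \<omega> u \<inter> UNIV. L-lipschitz_on (cball r u \<inter> {0<..}) (W \<omega>')"
      by (intro exI[of _ 1] exI[of _ \<delta>]) auto
  qed
qed (simp add: W_cont)

lemma W_bounded_at_one:
  obtains M where "\<And>\<omega>. \<bar>W \<omega> 1\<bar> \<le> M"
proof -
  have "compact (range (\<lambda>\<omega>. W \<omega> 1))"
    using compact_continuous_image[OF W_cont[OF zero_less_one] compact_space] by simp
  then have "bounded (range (\<lambda>\<omega>. W \<omega> 1))" by (rule compact_imp_bounded)
  then show thesis using that unfolding bounded_iff by auto
qed

lemma W_upper_affine:
  obtains C where "\<And>\<omega> r. 0 < r \<Longrightarrow> W \<omega> r \<le> C + \<delta> * r"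
proof -
  obtain M where M: "\<And>\<omega>. \<bar>W \<omega> 1\<bar> \<le> M" using W_bounded_at_one by blast
  have "W \<omega> r \<le> M + \<delta> * r" if "0 < r" for \<omega> r
  proof (cases "1 \<le> r")
    case True
    then show ?thesis
      using W_increment_bounds[of 1 r \<omega>] M[of \<omega>] delta_pos by (simp add: algebra_simps abs_le_iff)
  next
    case False
    then have "\<beta> * (1 - r) \<le> W \<omega> 1 - W \<omega> r" using W_increment_bounds[of r 1 \<omega>] that by simp
    moreover have "0 \<le> \<beta> * (1 - r)" "0 < \<delta> * r" using False beta_pos delta_pos that by simp_all
    ultimately show ?thesis using M[of \<omega>] unfolding abs_le_iff by linarith
  qed
  then show thesis by (rule that)
qed

lemma W_lower_affine:
  obtains C where "\<And>\<omega> r. 1 \<le> r \<Longrightarrow> \<beta> * r - C \<le> W \<omega> r"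
proof -
  obtain M where M: "\<And>\<omega>. \<bar>W \<omega> 1\<bar> \<le> M" using W_bounded_at_one by blast
  have "\<beta> * r - (M + \<beta>) \<le> W \<omega> r" if "1 \<le> r" for \<omega> r
    using W_increment_bounds[of 1 r \<omega>] M[of \<omega>] that by (simp add: algebra_simps abs_le_iff)
  then show thesis by (rule that)
qed

lemma k_nonneg: "0 < x \<Longrightarrow> 0 \<le> k x"
proof -
  assume "0 < x"
  have "\<forall>\<^sub>F y in at_top. k y \<le> k x"
    unfolding eventually_at_top_linorder
  proof (intro exI[of _ x] allI impI)
    fix y assume "x \<le> y"
    then show "k y \<le> k x" using monotone_onD[OF k_antimono, of x y] \<open>0 < x\<close> by simp
  qed
  from tendsto_upperbound[OF k_tendsto this] show ?thesis by simp
qed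

lemma k_upper_bound:
  obtains K where "\<And>x. 0 < x \<Longrightarrow> k x \<le> K"
proof -
  obtain K where "\<forall>y\<in>k ` {0<..}. norm y \<le> K" using k_bounded unfolding bounded_iff by blast
  then have "k x \<le> K" if "0 < x" for x using that abs_le_D1[of "k x" K] by force
  then show thesis by (rule that)
qed

lemma E_subset_D: "E \<subseteq> D"
  unfolding E_def by (rule escaping_subset)

lemma E_subset_iter_domain: "E \<subseteq> iter_domain f D n"
  unfolding E_def by (rule escaping_subset_iter_domain)

lemma E_pos: "p \<in> E \<Longrightarrow> 0 < snd p"
  using E_subset_D D_subset by auto

lemma E_funpow: "p \<in> E \<Longrightarrow> (f ^^ n) p \<in> E"
  unfolding E_def by (rule escaping_funpow)

lemma open_iter_domain: "open (iter_domain f D n)"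
proof (induction n)
  case (Suc n)
  have "iter_domain f D (Suc n) = f -` iter_domain f D n \<inter> D" by auto
  with Suc f_cont D_open show ?case by (simp add: continuous_on_open_vimage)
qed (simp add: D_open)

(* Total Borel extensions of f and W; they agree with f and W along orbits in E. *)
definition f_ext :: "'a \<times> real \<Rightarrow> 'a \<times> real" where
  "f_ext p = (if p \<in> D then f p else p)"

lemma f_ext_funpow: "p \<in> (\<Inter>n. iter_domain f D n) \<Longrightarrow> (f_ext ^^ n) p = (f ^^ n) p"
proof (induction n arbitrary: p)
  case (Suc n)
  note step = Inter_iter_domain_step[OF Suc.prems]
  show ?case
    using Suc.IH[OF step(2)] step(1) by (simp add: funpow_Suc_right f_ext_def del: funpow.simps)
qed simp

lemma f_ext_funpow_measurable: "f_ext ^^ n \<in> borel_measurable borel"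
proof -
  have "f_ext \<in> borel_measurable borel"
    unfolding f_ext_def[abs_def]
    by (rule borel_measurable_continuous_on_if) (auto intro: f_cont borel_open D_open continuous_on_id)
  then show ?thesis by (induction n) (auto intro: measurable_compose)
qed

definition W_ext :: "'a \<times> real \<Rightarrow> real" where
  "W_ext p = (if p \<in> UNIV \<times> {0<..} then case_prod W p else 0)"

lemma W_ext_measurable [measurable]: "W_ext \<in> borel_measurable borel"
  unfolding W_ext_def[abs_def]
  by (rule borel_measurable_continuous_on_if) (auto intro!: W_continuous borel_open open_Times)

lemma W_ext_funpow_E: "p \<in> E \<Longrightarrow> W_ext ((f_ext ^^ n) p) = case_prod W ((f ^^ n) p)"
  using f_ext_funpow[of p n] E_pos[OF E_funpow, of p n]
  by (auto simp: E_def escaping_def W_ext_def mem_Times_iff)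

lemma E_borel: "E \<in> sets borel"
proof -
  have [measurable]: "(\<lambda>p. snd ((f_ext ^^ n) p)) \<in> borel_measurable borel" for n
    by (intro measurable_compose[OF f_ext_funpow_measurable] borel_measurable_continuous_onI
        continuous_intros)
  have "E = (\<Inter>n. iter_domain f D n) \<inter>
      {p \<in> space borel. filterlim (\<lambda>n. snd ((f_ext ^^ n) p)) at_top sequentially}"
    by (auto simp: E_def escaping_def f_ext_funpow)
  moreover have "(\<Inter>n. iter_domain f D n) \<in> sets borel" using open_iter_domain by auto
  moreover have "{p \<in> space borel. filterlim (\<lambda>n. snd ((f_ext ^^ n) p)) at_top sequentially} \<in> sets borel"
    by measurable
  ultimately show ?thesis by simp
qed

lemma funpow_vimage_borel:
  assumes "S \<in> sets borel" "A \<in> sets borel" "A \<subseteq> E"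
  shows "{p \<in> A. (f ^^ n) p \<in> S} \<in> sets borel"
proof -
  have "{p \<in> A. (f ^^ n) p \<in> S} = A \<inter> ((f_ext ^^ n) -` S \<inter> space borel)"
    using assms(3) by (auto simp: E_def escaping_def f_ext_funpow)
  moreover have "(f_ext ^^ n) -` S \<inter> space borel \<in> sets borel"
    by (rule measurable_sets[OF f_ext_funpow_measurable assms(1)])
  ultimately show ?thesis using assms(2) by simp
qed

lemma f_image:
  assumes "B \<in> sets \<nu>" "B \<subseteq> D"
  shows "f ` B \<in> sets \<nu> \<and> emeasure \<nu> (f ` B) = emeasure \<nu> B"
proof
  have B: "B \<in> sets borel" using assms(1) sets_\<nu> by simp
  have "\<exists>K::nat \<Rightarrow> ('a \<times> real) set. (\<forall>m. compact (K m)) \<and> U = (\<Union>m. K m)" if "open U" for U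
    using open_Times_compact_sigma_compact[OF compact_space that] by blast
  then show "f ` B \<in> sets \<nu>"
    unfolding sets_\<nu> using sets_borel_image_inj_on[OF D_open f_cont f_inj _ B assms(2)] by blast
  show "emeasure \<nu> (f ` B) = emeasure \<nu> B"
    by (rule f_measure_preserving[OF B assms(2)])
qed

lemma f_funpow_image:
  "B \<in> sets \<nu> \<Longrightarrow> B \<subseteq> iter_domain f D n \<Longrightarrow>
    (f ^^ n) ` B \<in> sets \<nu> \<and> emeasure \<nu> ((f ^^ n) ` B) = emeasure \<nu> B"
  by (rule funpow_image_iter_domain[OF f_image])

lemma W_funpow_at_top:
  assumes "p \<in> E"
  shows "filterlim (\<lambda>n. case_prod W ((f ^^ n) p)) at_top sequentially"
proof -
  obtain C where C: "\<And>\<omega> r. 1 \<le> r \<Longrightarrow> \<beta> * r - C \<le> W \<omega> r" using W_lower_affine by blast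
  let ?r = "\<lambda>n. snd ((f ^^ n) p)"
  have r: "filterlim ?r at_top sequentially" using assms by (simp add: E_def escaping_def)
  have "filterlim (\<lambda>n. - C + \<beta> * ?r n) at_top sequentially"
    by (intro filterlim_tendsto_add_at_top[OF tendsto_const]
        filterlim_tendsto_pos_mult_at_top[OF tendsto_const beta_pos r])
  moreover have "\<forall>\<^sub>F n in sequentially. - C + \<beta> * ?r n \<le> case_prod W ((f ^^ n) p)"
  proof -
    have "\<forall>\<^sub>F n in sequentially. 1 \<le> ?r n" using r by (simp add: filterlim_at_top)
    then show ?thesis by eventually_elim (use C in \<open>auto simp: split_beta\<close>)
  qed
  ultimately show ?thesis by (rule filterlim_at_top_mono)
qed

definition last_exit :: "real \<Rightarrow> ('a \<times> real) set" where
  "last_exit T = {p \<in> E. case_prod W p \<le> T \<and> (\<forall>n\<ge>1. T < case_prod W ((f ^^ n) p))}"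

lemma last_exit_subset_E: "last_exit T \<subseteq> E"
  by (auto simp: last_exit_def)

lemma last_exit_exists:
  assumes p: "p \<in> E" and T: "case_prod W p \<le> T"
  obtains n where "(f ^^ n) p \<in> last_exit T"
proof -
  define S where "S = {n. case_prod W ((f ^^ n) p) \<le> T}"
  obtain N where N: "\<And>n. N \<le> n \<Longrightarrow> T < case_prod W ((f ^^ n) p)"
    using W_funpow_at_top[OF p] unfolding filterlim_at_top_dense eventually_sequentially by blast
  have "S \<subseteq> {..<N}" using N by (force simp: S_def not_less[symmetric])
  then have "finite S" by (rule finite_subset) simp
  moreover have "0 \<in> S" using T by (simp add: S_def)
  ultimately have max: "Max S \<in> S" "\<And>n. n \<in> S \<Longrightarrow> n \<le> Max S" by (auto intro: Max_in)
  have "(f ^^ Max S) p \<in> last_exit T"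
    unfolding last_exit_def
  proof (intro CollectI conjI allI impI)
    show "(f ^^ Max S) p \<in> E" by (rule E_funpow[OF p])
    show "case_prod W ((f ^^ Max S) p) \<le> T" using max(1) by (simp add: S_def)
    fix j :: nat assume "1 \<le> j"
    then have "j + Max S \<notin> S" using max(2)[of "j + Max S"] by auto
    then show "T < case_prod W ((f ^^ j) ((f ^^ Max S) p))" by (simp add: S_def funpow_add)
  qed
  then show thesis by (rule that)
qed

lemma last_exit_borel: "last_exit T \<in> sets borel"
proof -
  have [measurable]: "(\<lambda>p. W_ext ((f_ext ^^ n) p)) \<in> borel_measurable borel" for n
    by (rule measurable_compose[OF f_ext_funpow_measurable W_ext_measurable])
  have W_ext_E: "p \<in> E \<Longrightarrow> W_ext p = case_prod W p" for p
    using W_ext_funpow_E[of p 0] by simp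
  have "last_exit T = E \<inter> {p \<in> space borel. W_ext p \<le> T \<and> (\<forall>n. 1 \<le> n \<longrightarrow> T < W_ext ((f_ext ^^ n) p))}"
    unfolding last_exit_def using W_ext_E W_ext_funpow_E by (auto simp del: funpow.simps)
  moreover have "{p \<in> space borel. W_ext p \<le> T \<and> (\<forall>n. 1 \<le> n \<longrightarrow> T < W_ext ((f_ext ^^ n) p))} \<in> sets borel"
    by measurable
  ultimately show ?thesis using E_borel by auto
qed

definition band :: "real \<Rightarrow> real \<Rightarrow> ('a \<times> real) set" where
  "band a b = {p. 0 < snd p \<and> a < case_prod W p \<and> case_prod W p \<le> b}"

lemma band_borel: "band a b \<in> sets borel"
proof -
  have "band a b = (UNIV \<times> {0<..}) \<inter> {p \<in> space borel. a < W_ext p \<and> W_ext p \<le> b}"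
    by (auto simp: band_def W_ext_def)
  moreover have "UNIV \<times> {0<..} \<in> sets (borel :: ('a \<times> real) measure)"
    by (intro borel_open open_Times) simp_all
  moreover have "{p \<in> space borel. a < W_ext p \<and> W_ext p \<le> b} \<in> sets borel" by measurable
  ultimately show ?thesis by simp
qed

lemma band_measure:
  assumes "a \<le> b"
  shows "emeasure \<nu> (band a b) \<le> ennreal (2 * (b - a) / \<beta>)"
proof -
  interpret prob_space \<mu> by (rule prob_space_\<mu>)
  have slice: "emeasure lborel (Pair \<omega> -` band a b) \<le> ennreal (2 * (b - a) / \<beta>)" for \<omega>
  proof (cases "Pair \<omega> -` band a b = {}")
    case False
    then obtain r0 where r0: "(\<omega>, r0) \<in> band a b" by blast
    have "Pair \<omega> -` band a b \<subseteq> {r0 - (b - a) / \<beta> .. r0 + (b - a) / \<beta>}"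
    proof
      fix r assume "r \<in> Pair \<omega> -` band a b"
      with r0 have h: "0 < r0" "a < W \<omega> r0" "W \<omega> r0 \<le> b" "0 < r" "a < W \<omega> r" "W \<omega> r \<le> b"
        by (auto simp: band_def)
      then have "\<bar>W \<omega> r - W \<omega> r0\<bar> \<le> b - a" by (simp add: abs_le_iff)
      moreover have "\<beta> * \<bar>r - r0\<bar> \<le> \<bar>W \<omega> r - W \<omega> r0\<bar>"
        using W_increment_abs_bounds[OF h(1,4)] by simp
      ultimately have "\<beta> * \<bar>r - r0\<bar> \<le> b - a" by linarith
      then have "\<bar>r - r0\<bar> \<le> (b - a) / \<beta>"
        using beta_pos by (simp add: pos_le_divide_eq mult.commute)
      then show "r \<in> {r0 - (b - a) / \<beta> .. r0 + (b - a) / \<beta>}" by (auto simp: abs_le_iff)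
    qed
    then have "emeasure lborel (Pair \<omega> -` band a b) \<le> emeasure lborel {r0 - (b - a) / \<beta> .. r0 + (b - a) / \<beta>}"
      by (rule emeasure_mono) simp
    also have "\<dots> = ennreal (2 * (b - a) / \<beta>)"
      using assms beta_pos by simp
    finally show ?thesis .
  qed simp
  have "emeasure \<nu> (band a b) = (\<integral>\<^sup>+\<omega>. emeasure lborel (Pair \<omega> -` band a b) \<partial>\<mu>)"
    by (rule lborel.emeasure_pair_measure_alt) (use band_borel sets_\<nu> in simp)
  also have "\<dots> \<le> (\<integral>\<^sup>+\<omega>. ennreal (2 * (b - a) / \<beta>) \<partial>\<mu>)"
    by (intro nn_integral_mono slice)
  also have "\<dots> = ennreal (2 * (b - a) / \<beta>)" by (simp add: emeasure_space_1)
  finally show ?thesis .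
qed

lemma last_exit_far: "\<forall>\<^sub>F T in at_top. \<forall>q\<in>last_exit T. \<rho> \<le> snd q"
proof -
  obtain C where C: "\<And>\<omega> r. 0 < r \<Longrightarrow> W \<omega> r \<le> C + \<delta> * r" using W_upper_affine by blast
  obtain K where K: "\<And>x. 0 < x \<Longrightarrow> k x \<le> K" using k_upper_bound by blast
  have far: "\<rho> \<le> snd q" if T: "K + C + \<delta> * \<rho> \<le> T" and q: "q \<in> last_exit T" for T q
  proof -
    have "q \<in> E" using q last_exit_subset_E by blast
    then have "q \<in> D" "0 < snd q" using E_subset_D E_pos[of q] by auto
    have "T < case_prod W ((f ^^ 1) q)" using q unfolding last_exit_def by blast
    also have "\<dots> \<le> case_prod W q + k (snd q)" using W_step[OF \<open>q \<in> D\<close>] by simp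
    also have "\<dots> \<le> C + \<delta> * snd q + K"
      using C[OF \<open>0 < snd q\<close>, of "fst q"] K[OF \<open>0 < snd q\<close>] by (simp add: split_beta)
    finally have "\<delta> * \<rho> < \<delta> * snd q" using T by linarith
    with delta_pos show ?thesis by simp
  qed
  show ?thesis
    unfolding eventually_at_top_linorder
  proof (intro exI[of _ "K + C + \<delta> * \<rho>"] allI impI ballI)
    fix T q assume "K + C + \<delta> * \<rho> \<le> T" "q \<in> last_exit T"
    then show "\<rho> \<le> snd q" by (rule far)
  qed
qed

lemma last_exit_subset_band:
  assumes "0 < \<rho>" "\<forall>q\<in>last_exit T. \<rho> \<le> snd q"
  shows "last_exit T \<subseteq> band (T - k \<rho>) T"
proof
  fix q assume q: "q \<in> last_exit T"
  have "q \<in> E" using q last_exit_subset_E by blast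
  then have "q \<in> D" "0 < snd q" using E_subset_D E_pos[of q] by auto
  have "T < case_prod W ((f ^^ 1) q)" using q unfolding last_exit_def by blast
  also have "\<dots> \<le> case_prod W q + k (snd q)" using W_step[OF \<open>q \<in> D\<close>] by simp
  also have "k (snd q) \<le> k \<rho>"
    using monotone_onD[OF k_antimono, of \<rho> "snd q"] assms q \<open>0 < snd q\<close> by simp
  finally have "T - k \<rho> < case_prod W q" by simp
  moreover have "case_prod W q \<le> T" using q unfolding last_exit_def by blast
  ultimately show "q \<in> band (T - k \<rho>) T" using \<open>0 < snd q\<close> by (simp add: band_def)
qed

(* After its last exit below c an orbit stays above c, so it never returns to last_exit c. *)
lemma funpow_last_exit_disjoint:
  assumes "n \<noteq> m"
  shows "(f ^^ n) ` last_exit c \<inter> (f ^^ m) ` last_exit c = {}"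
proof -
  have "(f ^^ n) ` last_exit c \<inter> (f ^^ m) ` last_exit c = {}" if "n < m" for n m
  proof (rule ccontr)
    assume "(f ^^ n) ` last_exit c \<inter> (f ^^ m) ` last_exit c \<noteq> {}"
    then obtain p q where p: "p \<in> last_exit c" and q: "q \<in> last_exit c" and eq: "(f ^^ n) p = (f ^^ m) q"
      by blast
    define d where "d = m - n"
    have "1 \<le> d" "m = n + d" using that by (auto simp: d_def)
    then have "(f ^^ n) p = (f ^^ n) ((f ^^ d) q)" using eq by (simp add: funpow_add)
    moreover have "p \<in> E" "(f ^^ d) q \<in> E" using p q last_exit_subset_E E_funpow by blast+
    then have "p \<in> iter_domain f D n" "(f ^^ d) q \<in> iter_domain f D n" using E_subset_iter_domain by blast+
    ultimately have "p = (f ^^ d) q" using inj_on_funpow_iter_domain[OF f_inj] by (auto dest: inj_onD)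
    moreover have "case_prod W p \<le> c" using p unfolding last_exit_def by blast
    moreover have "c < case_prod W ((f ^^ d) q)" using q \<open>1 \<le> d\<close> unfolding last_exit_def by blast
    ultimately show False by simp
  qed
  with assms show ?thesis by (metis Int_commute linorder_neqE_nat)
qed

(* f\<^sup>n carries the points of last_exit c whose last exit below T happens at time n into
   last_exit T, measure-preservingly and with disjoint images for distinct n. *)
lemma emeasure_last_exit_mono:
  assumes "c \<le> T"
  shows "emeasure \<nu> (last_exit c) \<le> emeasure \<nu> (last_exit T)"
proof -
  define A where "A n = {p \<in> last_exit c. (f ^^ n) p \<in> last_exit T}" for n
  have A: "A n \<in> sets \<nu>" for n
    unfolding A_def sets_\<nu> by (intro funpow_vimage_borel last_exit_borel last_exit_subset_E)
  have "A n \<subseteq> iter_domain f D n" for n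
    using last_exit_subset_E E_subset_iter_domain unfolding A_def by blast
  then have image: "(f ^^ n) ` A n \<in> sets \<nu>" "emeasure \<nu> ((f ^^ n) ` A n) = emeasure \<nu> (A n)" for n
    using f_funpow_image[OF A] by auto
  have "disjoint_family (\<lambda>n. (f ^^ n) ` A n)"
    unfolding disjoint_family_on_def
  proof (intro ballI impI)
    fix n m :: nat assume "n \<noteq> m"
    have "A n \<subseteq> last_exit c" for n by (auto simp: A_def)
    then show "(f ^^ n) ` A n \<inter> (f ^^ m) ` A m = {}"
      using funpow_last_exit_disjoint[OF \<open>n \<noteq> m\<close>, of c] by blast
  qed
  have "last_exit c \<subseteq> (\<Union>n. A n)"
  proof
    fix p assume p: "p \<in> last_exit c"
    then have "p \<in> E" "case_prod W p \<le> T" using assms by (auto simp: last_exit_def)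
    then obtain n where "(f ^^ n) p \<in> last_exit T" by (rule last_exit_exists)
    with p show "p \<in> (\<Union>n. A n)" by (auto simp: A_def)
  qed
  then have "emeasure \<nu> (last_exit c) \<le> emeasure \<nu> (\<Union>n. A n)"
    using A by (intro emeasure_mono) auto
  also have "\<dots> \<le> (\<Sum>n. emeasure \<nu> (A n))" using A by (intro emeasure_subadditive_countably) auto
  also have "\<dots> = (\<Sum>n. emeasure \<nu> ((f ^^ n) ` A n))" by (simp add: image)
  also have "\<dots> = emeasure \<nu> (\<Union>n. (f ^^ n) ` A n)"
    using image \<open>disjoint_family _\<close> by (intro suminf_emeasure) auto
  also have "\<dots> \<le> emeasure \<nu> (last_exit T)"
    using last_exit_borel sets_\<nu> by (intro emeasure_mono) (auto simp: A_def)
  finally show ?thesis .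
qed

lemma last_exit_null: "last_exit c \<in> null_sets \<nu>"
proof -
  have bound: "emeasure \<nu> (last_exit c) \<le> ennreal e" if "0 < e" for e :: real
  proof -
    have "0 < e * \<beta> / 2" using that beta_pos by simp
    with k_tendsto have "\<forall>\<^sub>F x in at_top. k x < e * \<beta> / 2" by (rule order_tendstoD(2))
    then obtain R where R: "\<And>x. R \<le> x \<Longrightarrow> k x < e * \<beta> / 2"
      unfolding eventually_at_top_linorder by blast
    define \<rho> where "\<rho> = max R 1"
    have \<rho>: "1 \<le> \<rho>" "k \<rho> < e * \<beta> / 2" using R[of \<rho>] by (simp_all add: \<rho>_def)
    have "\<forall>\<^sub>F T in at_top. c \<le> T \<and> (\<forall>q\<in>last_exit T. \<rho> \<le> snd q)"
      by (intro eventually_conj eventually_ge_at_top last_exit_far)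
    then obtain T where "\<And>T'. T \<le> T' \<Longrightarrow> c \<le> T' \<and> (\<forall>q\<in>last_exit T'. \<rho> \<le> snd q)"
      unfolding eventually_at_top_linorder by blast
    then have T: "c \<le> T" "\<forall>q\<in>last_exit T. \<rho> \<le> snd q" by auto
    have "emeasure \<nu> (last_exit c) \<le> emeasure \<nu> (last_exit T)"
      by (rule emeasure_last_exit_mono[OF T(1)])
    also have "\<dots> \<le> emeasure \<nu> (band (T - k \<rho>) T)"
    proof (rule emeasure_mono)
      show "last_exit T \<subseteq> band (T - k \<rho>) T" using \<rho>(1) T(2) by (intro last_exit_subset_band) auto
      show "band (T - k \<rho>) T \<in> sets \<nu>" using band_borel sets_\<nu> by simp
    qed
    also have "\<dots> \<le> ennreal (2 * (T - (T - k \<rho>)) / \<beta>)"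
      using k_nonneg[of \<rho>] \<rho>(1) by (intro band_measure) simp
    also have "\<dots> \<le> ennreal e"
      using \<rho>(2) beta_pos by (intro ennreal_leI) (simp add: pos_divide_le_eq)
    finally show ?thesis .
  qed
  have "emeasure \<nu> (last_exit c) \<le> 0"
  proof (rule ennreal_le_epsilon)
    fix e :: real assume "0 < e"
    then show "emeasure \<nu> (last_exit c) \<le> 0 + ennreal e" using bound by simp
  qed
  then show ?thesis using last_exit_borel sets_\<nu> by (simp add: null_sets_def)
qed

lemma E_null: "E \<in> null_sets \<nu>"
proof -
  define Q where "Q c n = {p \<in> E. (f ^^ n) p \<in> last_exit (real c)}" for c :: nat and n
  have Q: "Q c n \<in> null_sets \<nu>" for c n
  proof -
    have sets: "Q c n \<in> sets \<nu>"
      unfolding Q_def sets_\<nu> by (intro funpow_vimage_borel last_exit_borel E_borel) simp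
    have "Q c n \<subseteq> iter_domain f D n"
      using E_subset_iter_domain unfolding Q_def by blast
    then have "emeasure \<nu> (Q c n) = emeasure \<nu> ((f ^^ n) ` Q c n)"
      using f_funpow_image[OF sets] by simp
    also have "\<dots> \<le> emeasure \<nu> (last_exit (real c))"
      using last_exit_borel sets_\<nu> by (intro emeasure_mono) (auto simp: Q_def)
    finally show ?thesis using last_exit_null sets by (simp add: null_sets_def)
  qed
  have cover: "E \<subseteq> (\<Union>c. \<Union>n. Q c n)"
  proof
    fix p assume p: "p \<in> E"
    have "case_prod W p \<le> real (nat \<lceil>case_prod W p\<rceil>)" by (rule real_nat_ceiling_ge)
    with p obtain n where "(f ^^ n) p \<in> last_exit (real (nat \<lceil>case_prod W p\<rceil>))"
      by (rule last_exit_exists)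
    with p show "p \<in> (\<Union>c. \<Union>n. Q c n)" by (auto simp: Q_def)
  qed
  have "(\<Union>c. \<Union>n. Q c n) \<in> null_sets \<nu>" using Q by blast
  moreover have "E \<in> sets \<nu>" using E_borel sets_\<nu> by simp
  ultimately show ?thesis using cover by (rule null_sets_subset)
qed

end

section \<open>From the escaping set to its slices along the flow\<close>

lemma AE_null_flow_slices:
  fixes \<mu> :: "'a::{metric_space, ab_group_add} measure" and \<psi> :: "real \<Rightarrow> 'a"
    and E :: "('a \<times> real) set"
  assumes compact_space: "compact (UNIV :: 'a set)"
    and add_cont: "continuous_on UNIV (\<lambda>(x::'a, y). x + y)"
    and psi_cont: "continuous_on UNIV \<psi>"
    and prob: "prob_space \<mu>"
    and sets_\<mu>: "sets \<mu> = sets borel"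
    and translation_invariant: "\<And>a A. A \<in> sets borel \<Longrightarrow> emeasure \<mu> ((\<lambda>x. a + x) ` A) = emeasure \<mu> A"
    and E: "E \<in> sets borel" "E \<in> null_sets (\<mu> \<Otimes>\<^sub>M lborel)"
  shows "AE \<omega> in \<mu>. {(t, r). (\<omega> + \<psi> t, r) \<in> E} \<in> null_sets (lborel :: (real \<times> real) measure)"
proof -
  interpret prob_space \<mu> by (rule prob)
  interpret P1: pair_sigma_finite \<mu> "lborel :: real measure" ..
  interpret P2: pair_sigma_finite \<mu> "lborel :: (real \<times> real) measure" ..
  define S where "S = {x :: 'a \<times> (real \<times> real). (fst x + \<psi> (fst (snd x)), snd (snd x)) \<in> E}"
  have S: "S \<in> sets (\<mu> \<Otimes>\<^sub>M (lborel :: (real \<times> real) measure))"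
  proof -
    have "continuous_on UNIV (\<lambda>x::'a \<times> (real \<times> real). (fst x, \<psi> (fst (snd x))))"
      by (intro continuous_intros continuous_on_compose2[OF psi_cont]) auto
    from continuous_on_compose2[OF add_cont this]
    have "continuous_on UNIV (\<lambda>x::'a \<times> (real \<times> real). fst x + \<psi> (fst (snd x)))" by simp
    then have "(\<lambda>x::'a \<times> (real \<times> real). (fst x + \<psi> (fst (snd x)), snd (snd x))) \<in> borel_measurable borel"
      by (intro borel_measurable_continuous_onI continuous_intros)
    from measurable_sets[OF this E(1)] have "S \<in> sets borel" by (simp add: S_def vimage_def)
    moreover have "sets (\<mu> \<Otimes>\<^sub>M (lborel :: (real \<times> real) measure)) = sets borel"
      by (rule sets_pair_measure_borel_compact[OF compact_space sets_\<mu>]) simp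
    ultimately show ?thesis by simp
  qed
  have E_sets: "E \<in> sets (\<mu> \<Otimes>\<^sub>M lborel)" using E(2) by blast
  \<comment> \<open>By Fubini almost every horizontal slice of E is \<open>\<mu>\<close>-null, and by translation invariance
    the slice of S over \<open>(t, r)\<close> has the same measure as the slice of E over r.\<close>
  define g where "g r = emeasure \<mu> ((\<lambda>x. (x, r)) -` E)" for r
  have "(\<integral>\<^sup>+r. g r \<partial>lborel) = 0"
    using E(2) P1.emeasure_pair_measure_alt2[OF E_sets] by (simp add: g_def null_sets_def)
  moreover have "g \<in> borel_measurable lborel"
    unfolding g_def[abs_def] by (rule P1.measurable_emeasure_Pair2[OF E_sets])
  ultimately have "AE r in lborel. g r = 0" by (simp add: nn_integral_0_iff_AE)
  then obtain N where N: "{r \<in> space lborel. g r \<noteq> 0} \<subseteq> N" "emeasure lborel N = 0" "N \<in> sets lborel"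
    by (rule AE_E)
  have "UNIV \<times> N \<in> null_sets (lborel \<Otimes>\<^sub>M lborel)"
    using N by (intro lborel.times_in_null_sets2) auto
  then have "UNIV \<times> N \<in> null_sets (lborel :: (real \<times> real) measure)" by (simp add: lborel_prod)
  then have g_AE: "AE y in (lborel :: (real \<times> real) measure). g (snd y) = 0"
    by (rule AE_I') (use N(1) in auto)
  have slice: "emeasure \<mu> ((\<lambda>x. (x, y)) -` S) = g (snd y)" for y :: "real \<times> real"
  proof -
    have "(\<lambda>x. (x, y)) -` S = (\<lambda>x. - \<psi> (fst y) + x) ` ((\<lambda>x. (x, snd y)) -` E)"
      by (force simp: S_def algebra_simps intro: image_eqI[where x="_ + \<psi> (fst y)"])
    moreover have "(\<lambda>x::'a. (x, snd y)) \<in> borel_measurable borel"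
      by (intro borel_measurable_continuous_onI continuous_intros)
    from measurable_sets[OF this E(1)] have "(\<lambda>x. (x, snd y)) -` E \<in> sets borel" by simp
    ultimately show ?thesis by (simp only: translation_invariant g_def)
  qed
  have "emeasure (\<mu> \<Otimes>\<^sub>M lborel) S = (\<integral>\<^sup>+y. g (snd y) \<partial>(lborel :: (real \<times> real) measure))"
    using P2.emeasure_pair_measure_alt2[OF S] by (simp add: slice)
  also have "\<dots> = (\<integral>\<^sup>+y. 0 \<partial>(lborel :: (real \<times> real) measure))"
    using g_AE by (rule nn_integral_cong_AE)
  also have "\<dots> = 0" by simp
  finally have "S \<in> null_sets (\<mu> \<Otimes>\<^sub>M lborel)" using S by (rule null_setsI)
  then have "AE x in \<mu> \<Otimes>\<^sub>M lborel. x \<notin> S" by (rule AE_not_in)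
  then have "AE \<omega> in \<mu>. AE y in lborel. (\<omega>, y) \<notin> S" by (rule P2.AE_pair)
  then show ?thesis
  proof (rule eventually_mono)
    fix \<omega> assume "AE y in lborel. (\<omega>, y) \<notin> S"
    then have "Pair \<omega> -` S \<in> null_sets lborel"
      using AE_iff_null_sets[OF sets_Pair1[OF S]] by simp
    moreover have "Pair \<omega> -` S = {(t, r). (\<omega> + \<psi> t, r) \<in> E}" by (auto simp: S_def)
    ultimately show "{(t, r). (\<omega> + \<psi> t, r) \<in> E} \<in> null_sets lborel" by simp
  qed
qed

theorem theorem3p1:
  fixes \<mu> :: "'a::{metric_space, ab_group_add} measure"
    and \<psi> :: "real \<Rightarrow> 'a"
    and D :: "('a \<times> real) set"
    and F G :: "'a \<times> real \<Rightarrow> real"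
    and W :: "'a \<Rightarrow> real \<Rightarrow> real"
    and k :: "real \<Rightarrow> real"
    and \<beta> \<delta> :: real
  assumes compact_Omega: "compact (UNIV :: 'a set)"
    and add_cont: "continuous_on UNIV (\<lambda>(x::'a, y). x + y)"
    and minus_cont: "continuous_on UNIV (uminus :: 'a \<Rightarrow> 'a)"
    and psi_cont: "continuous_on UNIV \<psi>"
    and psi_hom: "\<And>s t. \<psi> (s + t) = \<psi> s + \<psi> t"
    and psi_dense: "closure (range \<psi>) = UNIV"
    and haar_prob: "prob_space \<mu>"
    and haar_sets: "sets \<mu> = sets borel"
    and haar_inv: "\<And>a A. A \<in> sets borel \<Longrightarrow> emeasure \<mu> ((\<lambda>x. a + x) ` A) = emeasure \<mu> A"
    and D_open: "open D"
    and D_sub: "D \<subseteq> UNIV \<times> {0<..}"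
    and F_cont: "continuous_on D F"
    and G_cont: "continuous_on D G"
    and f_maps: "\<And>\<omega> r. (\<omega>, r) \<in> D \<Longrightarrow> r + G (\<omega>, r) > 0"
    and f_cont: "continuous_on D (\<lambda>(\<omega>, r). (\<omega> + \<psi> (F (\<omega>, r)), r + G (\<omega>, r)))"
    and f_inj: "inj_on (\<lambda>(\<omega>, r). (\<omega> + \<psi> (F (\<omega>, r)), r + G (\<omega>, r))) D"
    and f_mp: "\<And>B. B \<in> sets (borel :: ('a \<times> real) measure) \<Longrightarrow> B \<subseteq> D \<Longrightarrow>
        emeasure (\<mu> \<Otimes>\<^sub>M lborel) ((\<lambda>(\<omega>, r). (\<omega> + \<psi> (F (\<omega>, r)), r + G (\<omega>, r))) ` B)
          = emeasure (\<mu> \<Otimes>\<^sub>M lborel) B"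
    and W_C1: "C1_psi_half \<psi> W"
    and beta_pos: "\<beta> > 0" and delta_pos: "\<delta> > 0"
    and W_r_bounds: "\<And>\<omega> r. r > 0 \<Longrightarrow> \<beta> \<le> deriv (W \<omega>) r \<and> deriv (W \<omega>) r \<le> \<delta>"
    and W_ineq: "\<And>\<omega> r. (\<omega>, r) \<in> D \<Longrightarrow>
        W (\<omega> + \<psi> (F (\<omega>, r))) (r + G (\<omega>, r)) \<le> W \<omega> r + k r"
    and k_decr: "antimono_on {0<..} k"
    and k_bdd: "bounded (k ` {0<..})"
    and k_lim: "(k \<longlongrightarrow> 0) at_top"
  shows "AE \<omega> in \<mu>. escaping_set \<psi> D F G \<omega> \<in> null_sets (lborel :: (real \<times> real) measure)"
proof -
  let ?f = "\<lambda>(\<omega>, r). (\<omega> + \<psi> (F (\<omega>, r)), r + G (\<omega>, r))"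
  have W_cont: "\<And>r. 0 < r \<Longrightarrow> continuous_on UNIV (\<lambda>\<omega>. W \<omega> r)"
    using W_C1 by (simp add: C1_psi_half_def C1_psi_def)
  have W_differentiable: "\<And>\<omega> r. 0 < r \<Longrightarrow> W \<omega> differentiable (at r)"
    using W_C1 unfolding C1_psi_half_def real_differentiable_def by blast
  have W_step: "\<And>p. p \<in> D \<Longrightarrow> case_prod W (?f p) \<le> case_prod W p + k (snd p)"
    using W_ineq by auto
  interpret escape_setting \<mu> D ?f W k \<beta> \<delta>
    by (rule escape_setting.intro) (fact compact_Omega haar_prob haar_sets D_open D_sub f_cont f_inj
        f_mp W_cont W_differentiable W_r_bounds beta_pos W_step k_decr k_bdd k_lim)+
  have "escaping_set \<psi> D F G \<omega> = {(t, r). (\<omega> + \<psi> t, r) \<in> E}" for \<omega>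
  proof -
    have "escaping (f_om \<psi> F G \<omega>) (D_om \<psi> D \<omega>) snd = (\<lambda>(t, r). (\<omega> + \<psi> t, r)) -` escaping ?f D snd"
      using D_sub by (intro escaping_vimage_semiconj) (auto simp: f_om_def D_om_def psi_hom add.assoc)
    then show ?thesis by (auto simp: escaping_set_eq_escaping E_def)
  qed
  then show ?thesis
    using AE_null_flow_slices[OF compact_Omega add_cont psi_cont haar_prob haar_sets haar_inv E_borel E_null]
    by simp
qed

end
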